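(* Let $K$ be an infinite commutative domain and $R$ an associative $K$-algebra on which $K$ acts torsion-freely. (i) If a semigroup $S$ satisfies an identity in variables $x,y,x_3,\dots$ which is left reduced (respectively right reduced, reduced), then $S$ satisfies an identity of the same type involving only the variables $x$ and $y$. (ii) If $R$ satisfies a binomial identity then either $R$ is bounded nil or $(R,\cdot)$ satisfies a semigroup identity. (iii) If $R$ satisfies a binomial identity which is left reduced (respectively right reduced, reduced) then $R$ satisfies a partial linear identity of the same type. (iv) If $y^n=0$ for all $y\in R$ then $e_{2n-1}=0$ for all $x,y\in R$.
   Context: A semigroup identity is $u=v$ with $u\ne v$ words in the free semigroup on $\{x,y,x_3,\dots\}$; it is left reduced if the first letters of $u,v$ differ, right reduced if the last letters differ, reduced if both. A binomial identity is a nontrivial polynomial identity $\alpha_1u_1+\alpha_2u_2=0$ ($u_1,u_2$ monomials, $\alpha_i\in K$), with left/right reduced defined via $u_1,u_2$ in the same way. $R$ is bounded nil if there is $n$ with $r^n=0$ for all $r\in R$. A partial linear identity is a nontrivial identity $\sum_{i=0}^n\alpha_iy^ixy^{n-i}=0$ ($\alpha_i\in K$); it is left reduced if $\alpha_0\ne0$, right reduced if $\alpha_n\neq0$, reduced if both. $e_1=[x,y]=xy-yx$, $e_{m+1}=[e_m,y]$. *)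

theory Defs
  imports Complex_Main
begin

text \<open>Variables of the free semigroup are natural numbers: 0 = x, 1 = y, 2 = x_3, 3 = x_4, ...
  Words (elements of the free semigroup) are nonempty lists of variables.\<close>

type_synonym word = "nat list"

fun eval_word :: "(nat \<Rightarrow> 'a::semigroup_mult) \<Rightarrow> word \<Rightarrow> 'a" where
  "eval_word \<sigma> [] = undefined"
| "eval_word \<sigma> [v] = \<sigma> v"
| "eval_word \<sigma> (v # w # ws) = \<sigma> v * eval_word \<sigma> (w # ws)"

definition sg_identity :: "word \<Rightarrow> word \<Rightarrow> bool" where
  "sg_identity u v \<longleftrightarrow> u \<noteq> [] \<and> v \<noteq> [] \<and> u \<noteq> v"

definition sg_satisfies :: "'a::semigroup_mult itself \<Rightarrow> word \<Rightarrow> word \<Rightarrow> bool" where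
  "sg_satisfies T u v \<longleftrightarrow> (\<forall>\<sigma> :: nat \<Rightarrow> 'a. eval_word \<sigma> u = eval_word \<sigma> v)"

definition left_reduced :: "word \<Rightarrow> word \<Rightarrow> bool" where
  "left_reduced u v \<longleftrightarrow> hd u \<noteq> hd v"

definition right_reduced :: "word \<Rightarrow> word \<Rightarrow> bool" where
  "right_reduced u v \<longleftrightarrow> last u \<noteq> last v"

definition reduced :: "word \<Rightarrow> word \<Rightarrow> bool" where
  "reduced u v \<longleftrightarrow> left_reduced u v \<and> right_reduced u v"

definition in_xy :: "word \<Rightarrow> word \<Rightarrow> bool" where
  "in_xy u v \<longleftrightarrow> set u \<union> set v \<subseteq> {0, 1}"

definition assoc_algebra :: "('k::comm_ring_1 \<Rightarrow> 'r::ring \<Rightarrow> 'r) \<Rightarrow> bool" where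
  "assoc_algebra sc \<longleftrightarrow> module sc \<and>
     (\<forall>a r s. sc a (r * s) = sc a r * s \<and> sc a (r * s) = r * sc a s)"

definition torsion_free :: "('k::comm_ring_1 \<Rightarrow> 'r::ring \<Rightarrow> 'r) \<Rightarrow> bool" where
  "torsion_free sc \<longleftrightarrow> (\<forall>a r. a \<noteq> 0 \<longrightarrow> sc a r = 0 \<longrightarrow> r = 0)"

text \<open>Binomial polynomial a1 u1 + a2 u2 in the free (non-unital) algebra; it is nonzero
  (nontrivial) iff the monomials differ and some coefficient is nonzero, or the monomials
  coincide and the coefficients do not cancel.\<close>
definition binomial_nontrivial :: "'k::comm_ring_1 \<Rightarrow> word \<Rightarrow> 'k \<Rightarrow> word \<Rightarrow> bool" where
  "binomial_nontrivial a1 u1 a2 u2 \<longleftrightarrow> u1 \<noteq> [] \<and> u2 \<noteq> [] \<and>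
     ((u1 \<noteq> u2 \<and> (a1 \<noteq> 0 \<or> a2 \<noteq> 0)) \<or> (u1 = u2 \<and> a1 + a2 \<noteq> 0))"

definition binomial_satisfies ::
  "('k::comm_ring_1 \<Rightarrow> 'r::ring \<Rightarrow> 'r) \<Rightarrow> 'k \<Rightarrow> word \<Rightarrow> 'k \<Rightarrow> word \<Rightarrow> bool" where
  "binomial_satisfies sc a1 u1 a2 u2 \<longleftrightarrow>
     (\<forall>\<sigma>. sc a1 (eval_word \<sigma> u1) + sc a2 (eval_word \<sigma> u2) = 0)"

definition pl_mono :: "nat \<Rightarrow> nat \<Rightarrow> word" where
  "pl_mono n i = replicate i 1 @ [0] @ replicate (n - i) 1"

definition pl_satisfies :: "('k::comm_ring_1 \<Rightarrow> 'r::ring \<Rightarrow> 'r) \<Rightarrow> nat \<Rightarrow> (nat \<Rightarrow> 'k) \<Rightarrow> bool" where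
  "pl_satisfies sc n \<alpha> \<longleftrightarrow>
     (\<forall>x y :: 'r. (\<Sum>i\<le>n. sc (\<alpha> i) (eval_word (\<lambda>v. if v = 0 then x else y) (pl_mono n i))) = 0)"

definition pl_nontrivial :: "nat \<Rightarrow> (nat \<Rightarrow> 'k::zero) \<Rightarrow> bool" where
  "pl_nontrivial n \<alpha> \<longleftrightarrow> (\<exists>i\<le>n. \<alpha> i \<noteq> 0)"

text \<open>Power r^n for n \<ge> 1 in a (possibly non-unital) semigroup.\<close>
definition spow :: "'a::semigroup_mult \<Rightarrow> nat \<Rightarrow> 'a" where
  "spow r n = eval_word (\<lambda>_. r) (replicate n 0)"

definition bounded_nil :: "'r::ring itself \<Rightarrow> bool" where
  "bounded_nil T \<longleftrightarrow> (\<exists>n\<ge>1. \<forall>r :: 'r. spow r n = 0)"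

fun e_comm :: "'r::ring \<Rightarrow> 'r \<Rightarrow> nat \<Rightarrow> 'r" where
  "e_comm x y 0 = x"
| "e_comm x y (Suc m) = e_comm x y m * y - y * e_comm x y m"

end

theory Submission
  imports Defs "HOL-Computational_Algebra.Polynomial"
begin

text \<open>
  (i) Identities are stable under renaming of variables. Sending the variables in a set A to x
  and all others to y keeps the first (last) letters of the two sides distinct as soon as A
  contains exactly one of them, and such an A exists for both ends simultaneously.

  (ii), (iii) Evaluating a binomial identity a1 u1 + a2 u2 = 0 at \<mu>-multiples of the variables,
  for infinitely many \<mu>, shows that either some monomial vanishes identically on R or both
  coefficients are nonzero and the words have equal length d. In the second case, putting one
  element r for all variables gives (a1 + a2) r^d = 0, so R is bounded nil unless a2 = -a1, and
  then u1 = u2 is a semigroup identity. For (iii), substitute y + \<lambda> x for the variables in A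
  and y for the others: the result is a polynomial in \<lambda> with coefficients in R vanishing for all
  \<lambda> \<in> K, so, K being infinite and acting torsion-freely, its \<lambda>-linear coefficient vanishes. That
  coefficient is a partial linear identity whose i-th coefficient collects a1 or a2 according
  to whether the i-th letter of u1 or u2 lies in A; choosing A as in (i) makes the extreme
  coefficients nonzero.

  (iv) e_m lies in the additive span of the y^i x y^(m-i), and for m = 2n - 1 each of these
  contains y^n.
\<close>

lemma eval_word_Cons: "w \<noteq> [] \<Longrightarrow> eval_word \<sigma> (v # w) = \<sigma> v * eval_word \<sigma> w"
  by (cases w) auto

lemma eval_word_append:
  "u \<noteq> [] \<Longrightarrow> w \<noteq> [] \<Longrightarrow> eval_word \<sigma> (u @ w) = eval_word \<sigma> u * eval_word \<sigma> w"
proof (induction u)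
  case (Cons a u)
  then show ?case by (cases "u = []") (auto simp: eval_word_Cons mult.assoc)
qed simp

lemma eval_word_map: "w \<noteq> [] \<Longrightarrow> eval_word \<sigma> (map f w) = eval_word (\<sigma> \<circ> f) w"
  by (induction w rule: induct_list012) auto

lemma eval_word_const: "w \<noteq> [] \<Longrightarrow> eval_word (\<lambda>_. r) w = spow r (length w)"
  using eval_word_map[of w "\<lambda>_. r" "\<lambda>_. 0"] by (simp add: spow_def map_replicate_const o_def)

lemma spow_Suc_left: "n \<ge> 1 \<Longrightarrow> spow r (Suc n) = r * spow r n"
  by (cases n) (simp_all add: spow_def)

lemma spow_Suc_right: "n \<ge> 1 \<Longrightarrow> spow r (Suc n) = spow r n * r"
  using eval_word_append[of "replicate n 0" "[0]" "\<lambda>_. r"]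
  by (simp add: spow_def replicate_append_same[symmetric])

section \<open>Semigroup identities in two variables\<close>

lemma sg_satisfies_map:
  assumes "sg_satisfies TYPE('s::semigroup_mult) u v" "u \<noteq> []" "v \<noteq> []"
  shows "sg_satisfies TYPE('s) (map f u) (map f v)"
  using assms by (simp add: sg_satisfies_def eval_word_map)

lemma sg_identity_if_left_reduced: "u \<noteq> [] \<Longrightarrow> v \<noteq> [] \<Longrightarrow> left_reduced u v \<Longrightarrow> sg_identity u v"
  by (auto simp: sg_identity_def left_reduced_def)

lemma sg_identity_if_right_reduced: "u \<noteq> [] \<Longrightarrow> v \<noteq> [] \<Longrightarrow> right_reduced u v \<Longrightarrow> sg_identity u v"
  by (auto simp: sg_identity_def right_reduced_def)

lemma separating_set:
  assumes "a \<noteq> b" "c \<noteq> d"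
  obtains A where "a \<in> A \<longleftrightarrow> b \<notin> A" and "c \<in> A \<longleftrightarrow> d \<notin> A"
proof (cases "d = a \<or> c = b")
  case True
  show thesis
    by (rule that[of "{a, d}"]) (use assms True in auto)
next
  case False
  show thesis
    by (rule that[of "{a, c}"]) (use assms False in auto)
qed

definition rename_xy :: "nat set \<Rightarrow> nat \<Rightarrow> nat" where
  "rename_xy A v = (if v \<in> A then 0 else 1)"

lemma rename_xy_identity:
  assumes sat: "sg_satisfies TYPE('s::semigroup_mult) u v" and ne: "u \<noteq> []" "v \<noteq> []"
  shows "in_xy (map (rename_xy A) u) (map (rename_xy A) v)"
    and "sg_satisfies TYPE('s) (map (rename_xy A) u) (map (rename_xy A) v)"
    and "(hd u \<in> A \<longleftrightarrow> hd v \<notin> A) \<Longrightarrow> left_reduced (map (rename_xy A) u) (map (rename_xy A) v)"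
    and "(last u \<in> A \<longleftrightarrow> last v \<notin> A) \<Longrightarrow> right_reduced (map (rename_xy A) u) (map (rename_xy A) v)"
proof -
  show "in_xy (map (rename_xy A) u) (map (rename_xy A) v)"
    by (auto simp: in_xy_def rename_xy_def)
  show "sg_satisfies TYPE('s) (map (rename_xy A) u) (map (rename_xy A) v)"
    using sg_satisfies_map[OF sat ne] .
  show "left_reduced (map (rename_xy A) u) (map (rename_xy A) v)" if "hd u \<in> A \<longleftrightarrow> hd v \<notin> A"
    using that ne by (simp add: left_reduced_def rename_xy_def hd_map)
  show "right_reduced (map (rename_xy A) u) (map (rename_xy A) v)" if "last u \<in> A \<longleftrightarrow> last v \<notin> A"
    using that ne by (simp add: right_reduced_def rename_xy_def last_map)
qed

lemma sg_identity_two_variables: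
  assumes id: "sg_identity u v" and sat: "sg_satisfies TYPE('s::semigroup_mult) u v"
  shows "left_reduced u v \<Longrightarrow>
      \<exists>u v. sg_identity u v \<and> left_reduced u v \<and> in_xy u v \<and> sg_satisfies TYPE('s) u v"
    and "right_reduced u v \<Longrightarrow>
      \<exists>u v. sg_identity u v \<and> right_reduced u v \<and> in_xy u v \<and> sg_satisfies TYPE('s) u v"
    and "reduced u v \<Longrightarrow>
      \<exists>u v. sg_identity u v \<and> reduced u v \<and> in_xy u v \<and> sg_satisfies TYPE('s) u v"
proof -
  have ne: "u \<noteq> []" "v \<noteq> []"
    using id by (auto simp: sg_identity_def)
  note renamed = rename_xy_identity[OF sat ne]
  have ne_map: "map (rename_xy A) u \<noteq> []" "map (rename_xy A) v \<noteq> []" for A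
    using ne by auto
  show "\<exists>u v. sg_identity u v \<and> left_reduced u v \<and> in_xy u v \<and> sg_satisfies TYPE('s) u v"
    if "left_reduced u v"
  proof -
    have hd_ne: "hd u \<noteq> hd v"
      using that by (simp add: left_reduced_def)
    obtain A where "hd u \<in> A \<longleftrightarrow> hd v \<notin> A"
      using separating_set[OF hd_ne hd_ne] .
    then have "left_reduced (map (rename_xy A) u) (map (rename_xy A) v)"
      by (rule renamed(3))
    with renamed(1,2) sg_identity_if_left_reduced[OF ne_map] show ?thesis
      by (intro exI[of _ "map (rename_xy A) u"] exI[of _ "map (rename_xy A) v"]) simp
  qed
  show "\<exists>u v. sg_identity u v \<and> right_reduced u v \<and> in_xy u v \<and> sg_satisfies TYPE('s) u v"
    if "right_reduced u v"
  proof -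
    have last_ne: "last u \<noteq> last v"
      using that by (simp add: right_reduced_def)
    obtain A where "last u \<in> A \<longleftrightarrow> last v \<notin> A"
      using separating_set[OF last_ne last_ne] .
    then have "right_reduced (map (rename_xy A) u) (map (rename_xy A) v)"
      by (rule renamed(4))
    with renamed(1,2) sg_identity_if_right_reduced[OF ne_map] show ?thesis
      by (intro exI[of _ "map (rename_xy A) u"] exI[of _ "map (rename_xy A) v"]) simp
  qed
  show "\<exists>u v. sg_identity u v \<and> reduced u v \<and> in_xy u v \<and> sg_satisfies TYPE('s) u v"
    if "reduced u v"
  proof -
    have hd_ne: "hd u \<noteq> hd v" and last_ne: "last u \<noteq> last v"
      using that by (simp_all add: reduced_def left_reduced_def right_reduced_def)
    obtain A where "hd u \<in> A \<longleftrightarrow> hd v \<notin> A" "last u \<in> A \<longleftrightarrow> last v \<notin> A"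
      using separating_set[OF hd_ne last_ne] .
    then have "reduced (map (rename_xy A) u) (map (rename_xy A) v)"
      using renamed(3,4) by (simp add: reduced_def)
    with renamed(1,2) sg_identity_if_left_reduced[OF ne_map] show ?thesis
      by (intro exI[of _ "map (rename_xy A) u"] exI[of _ "map (rename_xy A) v"]) (simp add: reduced_def)
  qed
qed

section \<open>Nil algebras and the commutators e_m\<close>

text \<open>The element y^i x y^j; R need not have a unit, so powers of y are applied as iterated
  one-sided multiplications.\<close>
definition sandwich :: "'r::ring \<Rightarrow> nat \<Rightarrow> nat \<Rightarrow> 'r \<Rightarrow> 'r" where
  "sandwich y i j x = ((*) y ^^ i) (((\<lambda>z. z * y) ^^ j) x)"

lemma funpow_mult_left_assoc: "((*) y ^^ i) z * w = ((*) y ^^ i) (z * w)" for y z w :: "'r::ring"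
  by (induction i) (auto simp: mult.assoc)

lemma funpow_mult_right_eq_spow: "n \<ge> 1 \<Longrightarrow> ((\<lambda>z. z * y) ^^ n) z = z * spow y n"
  for y z :: "'r::ring"
proof (induction n rule: nat_induct_at_least)
  case base
  then show ?case by (simp add: spow_def)
next
  case (Suc n)
  then show ?case by (simp add: spow_Suc_right mult.assoc)
qed

lemma funpow_mult_left_eq_spow: "n \<ge> 1 \<Longrightarrow> ((*) y ^^ n) z = spow y n * z"
  for y z :: "'r::ring"
proof (induction n rule: nat_induct_at_least)
  case base
  then show ?case by (simp add: spow_def)
next
  case (Suc n)
  then show ?case by (simp add: spow_Suc_left mult.assoc)
qed

lemma sandwich_mult_right: "sandwich y i j x * y = sandwich y i (Suc j) x"
  by (simp add: sandwich_def funpow_mult_left_assoc)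

lemma mult_sandwich_left: "y * sandwich y i j x = sandwich y (Suc i) j x"
  by (simp add: sandwich_def)

lemma sandwich_eq_zero:
  fixes x y :: "'r::ring"
  assumes "n \<ge> 1" and nil: "\<forall>r :: 'r. spow r n = 0" and "n \<le> i \<or> n \<le> j"
  shows "sandwich y i j x = 0"
proof -
  have funpow_zero: "(f ^^ k) 0 = 0" if "f 0 = 0" for f :: "'r \<Rightarrow> 'r" and k
    using that by (induction k) auto
  have left: "((*) y ^^ i) z = 0" if "n \<le> i" for z
  proof -
    have "((*) y ^^ i) z = ((*) y ^^ (i - n)) (((*) y ^^ n) z)"
      using that by (metis funpow_add le_add_diff_inverse2 o_apply)
    also have "\<dots> = ((*) y ^^ (i - n)) 0"
      using funpow_mult_left_eq_spow[OF \<open>n \<ge> 1\<close>, of y z] nil by simp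
    finally show ?thesis
      using funpow_zero[of "(*) y"] by simp
  qed
  have right: "((\<lambda>z. z * y) ^^ j) x = 0" if "n \<le> j"
  proof -
    have "((\<lambda>z. z * y) ^^ j) x = ((\<lambda>z. z * y) ^^ (j - n)) (((\<lambda>z. z * y) ^^ n) x)"
      using that by (metis funpow_add le_add_diff_inverse2 o_apply)
    also have "\<dots> = ((\<lambda>z. z * y) ^^ (j - n)) 0"
      using funpow_mult_right_eq_spow[OF \<open>n \<ge> 1\<close>, of y x] nil by simp
    finally show ?thesis
      using funpow_zero[of "\<lambda>z. z * y"] by simp
  qed
  show ?thesis
    using assms(3) left right funpow_zero[of "(*) y"] by (auto simp: sandwich_def)
qed

inductive_set monomial_span :: "'r::ring \<Rightarrow> 'r \<Rightarrow> nat \<Rightarrow> 'r set" for x y m where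
  sandwich: "i \<le> m \<Longrightarrow> sandwich y i (m - i) x \<in> monomial_span x y m"
| diff: "a \<in> monomial_span x y m \<Longrightarrow> b \<in> monomial_span x y m \<Longrightarrow> a - b \<in> monomial_span x y m"

lemma commutator_in_monomial_span:
  "a \<in> monomial_span x y m \<Longrightarrow> a * y - y * a \<in> monomial_span x y (Suc m)"
proof (induction rule: monomial_span.induct)
  case (sandwich i)
  then have right: "sandwich y i (m - i) x * y = sandwich y i (Suc m - i) x"
    by (simp add: sandwich_mult_right Suc_diff_le)
  have left: "y * sandwich y i (m - i) x = sandwich y (Suc i) (Suc m - Suc i) x"
    by (simp add: mult_sandwich_left)
  show ?case
    unfolding left right using sandwich by (intro monomial_span.intros) simp_all
next
  case (diff a b)
  have "(a - b) * y - y * (a - b) = (a * y - y * a) - (b * y - y * b)"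
    by (simp add: algebra_simps)
  with diff show ?case
    by (simp add: monomial_span.diff)
qed

lemma e_comm_in_monomial_span: "e_comm x y m \<in> monomial_span x y m"
proof (induction m)
  case 0
  show ?case
    using monomial_span.sandwich[of 0 0 y x] by (simp add: sandwich_def)
next
  case (Suc m)
  then show ?case
    using commutator_in_monomial_span by simp
qed

lemma monomial_span_eq_zero:
  "a \<in> monomial_span x y m \<Longrightarrow> (\<And>i. i \<le> m \<Longrightarrow> sandwich y i (m - i) x = 0) \<Longrightarrow> a = 0"
  by (induction rule: monomial_span.induct) auto

lemma e_comm_eq_zero_if_bounded_nil:
  fixes x y :: "'r::ring"
  assumes "n \<ge> 1" and "\<forall>r :: 'r. spow r n = 0"
  shows "e_comm x y (2 * n - 1) = 0"
  using e_comm_in_monomial_span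
proof (rule monomial_span_eq_zero)
  fix i assume "i \<le> 2 * n - 1"
  then have "n \<le> i \<or> n \<le> 2 * n - 1 - i"
    by linarith
  with assms show "sandwich y i (2 * n - 1 - i) x = 0"
    by (rule sandwich_eq_zero)
qed

section \<open>Polynomials in a scalar with coefficients in R\<close>

lemma assoc_algebra_module: "assoc_algebra sc \<Longrightarrow> module sc"
  by (simp add: assoc_algebra_def)

lemma assoc_algebra_scale_mult: "assoc_algebra sc \<Longrightarrow> sc a r * s = sc a (r * s)"
  by (simp add: assoc_algebra_def)

lemma assoc_algebra_mult_scale: "assoc_algebra sc \<Longrightarrow> r * sc a s = sc a (r * s)"
  by (metis assoc_algebra_def)

lemma torsion_freeD: "torsion_free sc \<Longrightarrow> a \<noteq> 0 \<Longrightarrow> sc a r = 0 \<Longrightarrow> r = 0"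
  by (simp add: torsion_free_def)

lemma eval_word_scale:
  assumes alg: "assoc_algebra sc" and "w \<noteq> []"
  shows "eval_word (\<lambda>v. sc \<mu> (\<sigma> v)) w = sc (\<mu> ^ length w) (eval_word \<sigma> w)"
  using assms(2)
proof (induction w rule: induct_list012)
  case (3 v w ws)
  interpret module sc
    using assoc_algebra_module[OF alg] .
  from 3 show ?case
    by (simp add: assoc_algebra_scale_mult[OF alg] assoc_algebra_mult_scale[OF alg] mult_ac)
qed simp_all

lemma finite_pow_eq_pow:
  assumes "d \<noteq> e"
  shows "finite {\<mu> :: 'k::idom. \<mu> ^ d = \<mu> ^ e}"
proof -
  define p :: "'k poly" where "p = monom 1 d - monom 1 e"
  have "coeff p d = 1"
    using assms by (simp add: p_def)
  then have "finite {x. poly p x = 0}"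
    by (intro poly_roots_finite) auto
  moreover have "poly p x = x ^ d - x ^ e" for x
    by (simp add: p_def poly_monom)
  ultimately show ?thesis
    by simp
qed

lemma coeffs_zero_if_power_sum_vanishes:
  fixes sc :: "'k::idom \<Rightarrow> 'r::ring \<Rightarrow> 'r" and c :: "nat \<Rightarrow> 'r"
  assumes K_infinite: "infinite (UNIV :: 'k set)" and "module sc" and tf: "torsion_free sc"
    and "\<And>l. (\<Sum>k\<le>D. sc (l ^ k) (c k)) = 0"
  shows "\<forall>k\<le>D. c k = 0"
  using assms(4)
proof (induction D arbitrary: c)
  case 0
  interpret module sc by fact
  from "0"[of 1] show ?case
    by simp
next
  case (Suc D)
  interpret module sc by fact
  have "finite (\<Union>k\<le>D. {\<mu> :: 'k. \<mu> ^ k = \<mu> ^ Suc D})"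
    by (intro finite_UN_I finite_atMost finite_pow_eq_pow) auto
  then obtain \<mu> :: 'k where \<mu>: "\<And>k. k \<le> D \<Longrightarrow> \<mu> ^ k \<noteq> \<mu> ^ Suc D"
    using ex_new_if_finite[OF K_infinite] by blast
  \<comment> \<open>Substituting \<mu> l for l and subtracting \<mu>^(D+1) times the original relation kills the top term.\<close>
  have "(\<Sum>k\<le>Suc D. sc (l ^ k) (sc (\<mu> ^ k - \<mu> ^ Suc D) (c k)))
      = (\<Sum>k\<le>Suc D. sc ((\<mu> * l) ^ k) (c k)) - sc (\<mu> ^ Suc D) (\<Sum>k\<le>Suc D. sc (l ^ k) (c k))" for l
    by (simp add: scale_sum_right sum_subtractf[symmetric] algebra_simps del: power_Suc)
  then have "(\<Sum>k\<le>D. sc (l ^ k) (sc (\<mu> ^ k - \<mu> ^ Suc D) (c k))) = 0" for l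
    using Suc.prems by (simp del: power_Suc)
  then have scaled_zero: "\<forall>k\<le>D. sc (\<mu> ^ k - \<mu> ^ Suc D) (c k) = 0"
    by (rule Suc.IH)
  have low: "c k = 0" if "k \<le> D" for k
  proof (rule torsion_freeD[OF tf])
    show "\<mu> ^ k - \<mu> ^ Suc D \<noteq> 0"
      using \<mu>[OF that] by simp
    show "sc (\<mu> ^ k - \<mu> ^ Suc D) (c k) = 0"
      using scaled_zero that by blast
  qed
  then have "c (Suc D) = 0"
    using Suc.prems[of 1] by simp
  with low show ?case
    by (auto simp: le_Suc_eq)
qed

fun word_coeff :: "'r::ring \<Rightarrow> 'r \<Rightarrow> nat set \<Rightarrow> word \<Rightarrow> nat \<Rightarrow> 'r" where
  "word_coeff x y A [] k = 0"
| "word_coeff x y A [v] k = (if k = 0 then y else if k = 1 \<and> v \<in> A then x else 0)"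
| "word_coeff x y A (v # w # ws) k = y * word_coeff x y A (w # ws) k +
     (if v \<in> A \<and> k \<ge> 1 then x * word_coeff x y A (w # ws) (k - 1) else 0)"

lemma word_coeff_eq_0_if_gt: "length w < k \<Longrightarrow> word_coeff x y A w k = 0"
  by (induction x y A w k rule: word_coeff.induct) auto

lemma word_coeff_0: "w \<noteq> [] \<Longrightarrow> word_coeff x y A w 0 = eval_word (\<lambda>_. y) w"
  by (induction x y A w "0::nat" rule: word_coeff.induct) auto

lemma eval_word_linear_subst:
  assumes alg: "assoc_algebra sc" and "w \<noteq> []"
  shows "eval_word (\<lambda>v. y + (if v \<in> A then sc l x else 0)) w
    = (\<Sum>k\<le>length w. sc (l ^ k) (word_coeff x y A w k))"
  using assms(2)
proof (induction w rule: induct_list012)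
  case (2 v)
  interpret module sc
    using assoc_algebra_module[OF alg] .
  show ?case
    by simp
next
  case (3 v w ws)
  interpret module sc
    using assoc_algebra_module[OF alg] .
  let ?W = "w # ws" and ?m = "length (w # ws)"
  let ?\<sigma> = "\<lambda>v. y + (if v \<in> A then sc l x else 0)"
  let ?S = "\<lambda>w. \<Sum>k\<le>length w. sc (l ^ k) (word_coeff x y A w k)"
  have IH: "eval_word ?\<sigma> ?W = ?S ?W"
    using 3 by simp
  have y_part: "(\<Sum>k\<le>Suc ?m. sc (l ^ k) (y * word_coeff x y A ?W k)) = y * ?S ?W"
  proof -
    have "(\<Sum>k\<le>Suc ?m. sc (l ^ k) (y * word_coeff x y A ?W k))
        = (\<Sum>k\<le>?m. sc (l ^ k) (y * word_coeff x y A ?W k))"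
      using word_coeff_eq_0_if_gt[of ?W "Suc ?m" x y A] by (simp only: sum.atMost_Suc) simp
    also have "\<dots> = y * ?S ?W"
      by (simp only: sum_distrib_left assoc_algebra_mult_scale[OF alg])
    finally show ?thesis .
  qed
  have x_part: "(\<Sum>k\<le>Suc ?m. sc (l ^ k)
        (if v \<in> A \<and> k \<ge> 1 then x * word_coeff x y A ?W (k - 1) else 0))
      = (if v \<in> A then sc l x * ?S ?W else 0)"
  proof -
    have shift: "sc (l ^ Suc k) (x * z) = sc l x * sc (l ^ k) z" for k z
      by (simp add: assoc_algebra_scale_mult[OF alg] assoc_algebra_mult_scale[OF alg] mult.commute)
    have "(\<Sum>k\<le>Suc ?m. sc (l ^ k)
        (if v \<in> A \<and> k \<ge> 1 then x * word_coeff x y A ?W (k - 1) else 0))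
      = (\<Sum>k\<le>?m. sc (l ^ Suc k) (if v \<in> A then x * word_coeff x y A ?W k else 0))"
      by (subst sum.atMost_Suc_shift) simp
    also have "\<dots> = (if v \<in> A then sc l x * ?S ?W else 0)"
      by (simp add: shift sum_distrib_left del: sum.atMost_Suc power_Suc)
    finally show ?thesis .
  qed
  have "?S (v # ?W) = y * ?S ?W + (if v \<in> A then sc l x * ?S ?W else 0)"
    unfolding y_part[symmetric] x_part[symmetric]
    by (simp only: length_Cons word_coeff.simps scale_right_distrib sum.distrib)
  then show ?case
    by (simp add: IH distrib_right)
qed simp

definition pl_eval :: "'r::ring \<Rightarrow> 'r \<Rightarrow> nat \<Rightarrow> nat \<Rightarrow> 'r" where
  "pl_eval x y n i = eval_word (\<lambda>v. if v = 0 then x else y) (pl_mono n i)"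

lemma pl_eval_Suc: "i \<le> n \<Longrightarrow> pl_eval x y (Suc n) (Suc i) = y * pl_eval x y n i"
proof -
  assume "i \<le> n"
  then have "pl_mono (Suc n) (Suc i) = 1 # pl_mono n i"
    by (simp add: pl_mono_def)
  then show ?thesis
    by (simp add: pl_eval_def eval_word_Cons pl_mono_def)
qed

lemma pl_eval_0: "w \<noteq> [] \<Longrightarrow> pl_eval x y (length w) 0 = x * eval_word (\<lambda>_. y) w"
proof -
  assume w: "w \<noteq> []"
  have "pl_mono (length w) 0 = 0 # map (\<lambda>_. 1) w"
    by (simp add: pl_mono_def map_replicate_const)
  with w show ?thesis
    by (simp add: pl_eval_def eval_word_Cons eval_word_map o_def)
qed

lemma word_coeff_1:
  "w \<noteq> [] \<Longrightarrow> word_coeff x y A w 1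
    = (\<Sum>i\<le>length w - 1. if w ! i \<in> A then pl_eval x y (length w - 1) i else 0)"
proof (induction w rule: induct_list012)
  case (2 v)
  then show ?case
    by (simp add: pl_eval_def pl_mono_def)
next
  case (3 v w ws)
  let ?W = "w # ws" and ?m = "length ws"
  have "word_coeff x y A (v # ?W) 1
      = y * (\<Sum>i\<le>?m. if ?W ! i \<in> A then pl_eval x y ?m i else 0)
        + (if v \<in> A then pl_eval x y (Suc ?m) 0 else 0)"
    using 3 pl_eval_0[of ?W x y] by (simp add: word_coeff_0 cong: if_cong)
  also have "\<dots> = (\<Sum>i\<le>?m. if ?W ! i \<in> A then pl_eval x y (Suc ?m) (Suc i) else 0)
        + (if v \<in> A then pl_eval x y (Suc ?m) 0 else 0)"
    by (simp add: sum_distrib_left pl_eval_Suc if_distrib cong: if_cong)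
  also have "\<dots> = (\<Sum>i\<le>Suc ?m. if (v # ?W) ! i \<in> A then pl_eval x y (Suc ?m) i else 0)"
    by (subst sum.atMost_Suc_shift) simp
  finally show ?case
    by (simp only: length_Cons diff_Suc_1)
qed simp

lemma binomial_identity_linearize:
  fixes sc :: "'k::idom \<Rightarrow> 'r::ring \<Rightarrow> 'r"
  assumes K_infinite: "infinite (UNIV :: 'k set)" and alg: "assoc_algebra sc" and tf: "torsion_free sc"
    and sat: "binomial_satisfies sc a1 u1 a2 u2"
    and len: "length u1 = Suc n" "length u2 = Suc n"
  shows "pl_satisfies sc n (\<lambda>i. (if u1 ! i \<in> A then a1 else 0) + (if u2 ! i \<in> A then a2 else 0))"
  unfolding pl_satisfies_def
proof (intro allI)
  fix x y :: 'r
  interpret module sc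
    using assoc_algebra_module[OF alg] .
  have ne: "u1 \<noteq> []" "u2 \<noteq> []"
    using len by auto
  define c where "c k = sc a1 (word_coeff x y A u1 k) + sc a2 (word_coeff x y A u2 k)" for k
  have "(\<Sum>k\<le>Suc n. sc (l ^ k) (c k)) = 0" for l
  proof -
    let ?\<sigma> = "\<lambda>v. y + (if v \<in> A then sc l x else 0)"
    have "(\<Sum>k\<le>Suc n. sc (l ^ k) (c k)) = sc a1 (eval_word ?\<sigma> u1) + sc a2 (eval_word ?\<sigma> u2)"
      by (simp add: c_def eval_word_linear_subst[OF alg] ne len scale_sum_right sum.distrib
          scale_right_distrib mult.commute del: sum.atMost_Suc)
    also have "\<dots> = 0"
      using sat by (simp add: binomial_satisfies_def)
    finally show ?thesis .
  qed
  then have "\<forall>k\<le>Suc n. c k = 0"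
    by (rule coeffs_zero_if_power_sum_vanishes[OF K_infinite assoc_algebra_module[OF alg] tf])
  have scale_if: "sc (if b then a else 0) z = (if b then sc a z else 0)"
    "sc a (if b then z else 0) = (if b then sc a z else 0)" for a b z
    by simp_all
  have "(\<Sum>i\<le>n. sc ((if u1 ! i \<in> A then a1 else 0) + (if u2 ! i \<in> A then a2 else 0))
      (pl_eval x y n i))
    = sc a1 (\<Sum>i\<le>n. if u1 ! i \<in> A then pl_eval x y n i else 0)
      + sc a2 (\<Sum>i\<le>n. if u2 ! i \<in> A then pl_eval x y n i else 0)"
    by (simp only: scale_sum_right scale_left_distrib scale_if sum.distrib)
  also have "\<dots> = c 1"
    by (simp only: c_def word_coeff_1[OF ne(1)] word_coeff_1[OF ne(2)] len diff_Suc_1)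
  also have "\<dots> = 0"
    using \<open>\<forall>k\<le>Suc n. c k = 0\<close> by simp
  finally show "(\<Sum>i\<le>n. sc ((if u1 ! i \<in> A then a1 else 0) + (if u2 ! i \<in> A then a2 else 0))
      (eval_word (\<lambda>v. if v = 0 then x else y) (pl_mono n i))) = 0"
    by (simp only: pl_eval_def)
qed

section \<open>Binomial identities\<close>

definition monomial_identity :: "'r::ring itself \<Rightarrow> word \<Rightarrow> bool" where
  "monomial_identity T w \<longleftrightarrow> w \<noteq> [] \<and> (\<forall>\<sigma> :: nat \<Rightarrow> 'r. eval_word \<sigma> w = 0)"

lemma pl_nontrivialI: "i \<le> n \<Longrightarrow> \<alpha> i \<noteq> 0 \<Longrightarrow> pl_nontrivial n \<alpha>"
  by (auto simp: pl_nontrivial_def)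

lemma monomial_identity_sg_identity:
  assumes "monomial_identity TYPE('r::ring) w"
  shows "\<exists>u v. sg_identity u v \<and> sg_satisfies TYPE('r) u v"
proof (intro exI conjI)
  show "sg_identity w (w @ w)"
    using assms by (auto simp: monomial_identity_def sg_identity_def)
  show "sg_satisfies TYPE('r) w (w @ w)"
    using assms by (simp add: monomial_identity_def sg_satisfies_def eval_word_append)
qed

lemma monomial_identity_pl_identity:
  fixes sc :: "'k::idom \<Rightarrow> 'r::ring \<Rightarrow> 'r"
  assumes K_infinite: "infinite (UNIV :: 'k set)" and alg: "assoc_algebra sc" and tf: "torsion_free sc"
    and w: "monomial_identity TYPE('r) w"
  shows "\<exists>n \<alpha>. pl_nontrivial n \<alpha> \<and> \<alpha> 0 \<noteq> 0 \<and> \<alpha> n \<noteq> 0 \<and> pl_satisfies sc n \<alpha>"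
proof -
  interpret module sc
    using assoc_algebra_module[OF alg] .
  have sat: "binomial_satisfies sc 1 w 0 w"
    using w by (simp add: binomial_satisfies_def monomial_identity_def)
  have len: "length w = Suc (length w - 1)"
    using w by (auto simp: monomial_identity_def)
  have "pl_satisfies sc (length w - 1)
      (\<lambda>i. (if w ! i \<in> UNIV then 1 else 0) + (if w ! i \<in> UNIV then 0 else 0))"
    by (rule binomial_identity_linearize[OF K_infinite alg tf sat len len])
  then have "pl_satisfies sc (length w - 1) (\<lambda>_. 1)"
    by simp
  then show ?thesis
    by (intro exI[of _ "length w - 1"] exI[of _ "\<lambda>_. 1"]) (auto simp: pl_nontrivial_def)
qed

lemma binomial_identity_length_neq:
  fixes sc :: "'k::idom \<Rightarrow> 'r::ring \<Rightarrow> 'r"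
  assumes K_infinite: "infinite (UNIV :: 'k set)" and alg: "assoc_algebra sc" and tf: "torsion_free sc"
    and sat: "binomial_satisfies sc a1 u1 a2 u2"
    and ne: "u1 \<noteq> []" "u2 \<noteq> []" and a2: "a2 \<noteq> 0" and len: "length u1 \<noteq> length u2"
  shows "monomial_identity TYPE('r) u2"
  unfolding monomial_identity_def
proof (intro conjI allI ne)
  fix \<sigma> :: "nat \<Rightarrow> 'r"
  interpret module sc
    using assoc_algebra_module[OF alg] .
  obtain \<mu> :: 'k where \<mu>: "\<mu> ^ length u1 \<noteq> \<mu> ^ length u2"
    using ex_new_if_finite[OF K_infinite finite_pow_eq_pow[OF len]] by blast
  let ?d1 = "length u1" and ?d2 = "length u2"
  let ?U1 = "eval_word \<sigma> u1" and ?U2 = "eval_word \<sigma> u2"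
  have scaled: "sc a1 (sc (\<mu> ^ ?d1) ?U1) + sc a2 (sc (\<mu> ^ ?d2) ?U2) = 0"
    using sat unfolding binomial_satisfies_def
    by (metis eval_word_scale[OF alg ne(1)] eval_word_scale[OF alg ne(2)])
  have plain: "sc a1 ?U1 + sc a2 ?U2 = 0"
    using sat unfolding binomial_satisfies_def by blast
  have "sc (a2 * (\<mu> ^ ?d2 - \<mu> ^ ?d1)) ?U2
      = (sc a1 (sc (\<mu> ^ ?d1) ?U1) + sc a2 (sc (\<mu> ^ ?d2) ?U2)) - sc (\<mu> ^ ?d1) (sc a1 ?U1 + sc a2 ?U2)"
    by (simp add: scale_right_distrib scale_left_diff_distrib right_diff_distrib mult.commute)
  also have "\<dots> = 0"
    using scaled plain by simp
  finally have "sc (a2 * (\<mu> ^ ?d2 - \<mu> ^ ?d1)) ?U2 = 0" .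
  moreover have "a2 * (\<mu> ^ ?d2 - \<mu> ^ ?d1) \<noteq> 0"
    using a2 \<mu> by simp
  ultimately show "?U2 = 0"
    using torsion_freeD[OF tf] by blast
qed

lemma binomial_identity_cases:
  fixes sc :: "'k::idom \<Rightarrow> 'r::ring \<Rightarrow> 'r"
  assumes K_infinite: "infinite (UNIV :: 'k set)" and alg: "assoc_algebra sc" and tf: "torsion_free sc"
    and nt: "binomial_nontrivial a1 u1 a2 u2" and sat: "binomial_satisfies sc a1 u1 a2 u2"
  shows "(\<exists>w. monomial_identity TYPE('r) w) \<or>
    (u1 \<noteq> u2 \<and> a1 \<noteq> 0 \<and> a2 \<noteq> 0 \<and> length u1 = length u2)"
proof -
  interpret module sc
    using assoc_algebra_module[OF alg] .
  have ne: "u1 \<noteq> []" "u2 \<noteq> []"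
    using nt by (auto simp: binomial_nontrivial_def)
  have eq: "sc a1 (eval_word \<sigma> u1) + sc a2 (eval_word \<sigma> u2) = 0" for \<sigma>
    using sat by (simp add: binomial_satisfies_def)
  have monomial: "monomial_identity TYPE('r) u"
    if "u \<noteq> []" "a \<noteq> 0" "\<And>\<sigma>. sc a (eval_word \<sigma> u) = (0::'r)" for a u
    using that torsion_freeD[OF tf] by (auto simp: monomial_identity_def)
  show ?thesis
  proof (cases "u1 = u2")
    case True
    then have "a1 + a2 \<noteq> 0"
      using nt by (simp add: binomial_nontrivial_def)
    moreover have "sc (a1 + a2) (eval_word \<sigma> u1) = 0" for \<sigma>
      using eq[of \<sigma>] True by (simp add: scale_left_distrib)
    ultimately show ?thesis
      using monomial[OF ne(1)] by blast
  next
    case False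
    then have "a1 \<noteq> 0 \<or> a2 \<noteq> 0"
      using nt by (simp add: binomial_nontrivial_def)
    then consider "a1 = 0" "a2 \<noteq> 0" | "a1 \<noteq> 0" "a2 = 0" | "a1 \<noteq> 0" "a2 \<noteq> 0" "length u1 \<noteq> length u2"
      | "a1 \<noteq> 0" "a2 \<noteq> 0" "length u1 = length u2"
      by blast
    then show ?thesis
    proof cases
      case 1
      then show ?thesis
        using monomial[OF ne(2), of a2] eq by auto
    next
      case 2
      then show ?thesis
        using monomial[OF ne(1), of a1] eq by auto
    next
      case 3
      then show ?thesis
        using binomial_identity_length_neq[OF K_infinite alg tf sat ne] by blast
    next
      case 4
      with False show ?thesis
        by blast
    qed
  qed
qed

lemma binomial_identity_bounded_nil_or_sg_identity:
  fixes sc :: "'k::idom \<Rightarrow> 'r::ring \<Rightarrow> 'r"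
  assumes K_infinite: "infinite (UNIV :: 'k set)" and alg: "assoc_algebra sc" and tf: "torsion_free sc"
    and nt: "binomial_nontrivial a1 u1 a2 u2" and sat: "binomial_satisfies sc a1 u1 a2 u2"
  shows "bounded_nil TYPE('r) \<or> (\<exists>u v. sg_identity u v \<and> sg_satisfies TYPE('r) u v)"
  using binomial_identity_cases[OF K_infinite alg tf nt sat]
proof
  assume "\<exists>w. monomial_identity TYPE('r) w"
  then show ?thesis
    using monomial_identity_sg_identity by blast
next
  assume h: "u1 \<noteq> u2 \<and> a1 \<noteq> 0 \<and> a2 \<noteq> 0 \<and> length u1 = length u2"
  interpret module sc
    using assoc_algebra_module[OF alg] .
  have ne: "u1 \<noteq> []" "u2 \<noteq> []"
    using nt by (auto simp: binomial_nontrivial_def)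
  have eq: "sc a1 (eval_word \<sigma> u1) + sc a2 (eval_word \<sigma> u2) = 0" for \<sigma>
    using sat by (simp add: binomial_satisfies_def)
  show ?thesis
  proof (cases "a1 + a2 = 0")
    case True
    then have "a2 = - a1"
      by (simp add: eq_neg_iff_add_eq_0 add.commute)
    have "eval_word \<sigma> u1 = eval_word \<sigma> u2" for \<sigma> :: "nat \<Rightarrow> 'r"
    proof -
      have "sc a1 (eval_word \<sigma> u1 - eval_word \<sigma> u2) = 0"
        using eq[of \<sigma>] \<open>a2 = - a1\<close> by (simp add: scale_right_diff_distrib)
      then have "eval_word \<sigma> u1 - eval_word \<sigma> u2 = 0"
        using h torsion_freeD[OF tf] by blast
      then show ?thesis
        by simp
    qed
    then have "sg_identity u1 u2 \<and> sg_satisfies TYPE('r) u1 u2"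
      using h ne by (simp add: sg_identity_def sg_satisfies_def)
    then show ?thesis
      by blast
  next
    case False
    have "spow r (length u1) = 0" for r :: 'r
    proof -
      have "sc (a1 + a2) (spow r (length u1)) = 0"
        using eq[of "\<lambda>_. r"] h by (simp add: eval_word_const ne scale_left_distrib)
      then show ?thesis
        using False torsion_freeD[OF tf] by blast
    qed
    moreover have "length u1 \<ge> 1"
      using ne by (simp add: Suc_le_eq)
    ultimately show ?thesis
      unfolding bounded_nil_def by blast
  qed
qed

lemma binomial_identity_pl_separating:
  fixes sc :: "'k::idom \<Rightarrow> 'r::ring \<Rightarrow> 'r"
  assumes K_infinite: "infinite (UNIV :: 'k set)" and alg: "assoc_algebra sc" and tf: "torsion_free sc"
    and sat: "binomial_satisfies sc a1 u1 a2 u2"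
    and a: "a1 \<noteq> 0" "a2 \<noteq> 0" and ne: "u1 \<noteq> []" and len: "length u1 = length u2"
  obtains n \<alpha> where "pl_satisfies sc n \<alpha>"
    and "(hd u1 \<in> A \<longleftrightarrow> hd u2 \<notin> A) \<Longrightarrow> \<alpha> 0 \<noteq> 0"
    and "(last u1 \<in> A \<longleftrightarrow> last u2 \<notin> A) \<Longrightarrow> \<alpha> n \<noteq> 0"
proof -
  define n where "n = length u1 - 1"
  define \<alpha> where "\<alpha> i = (if u1 ! i \<in> A then a1 else 0) + (if u2 ! i \<in> A then a2 else 0)" for i
  have "length u1 > 0"
    using ne by simp
  then have len1: "length u1 = Suc n" and len2: "length u2 = Suc n"
    using len by (simp_all add: n_def)
  then have ne2: "u2 \<noteq> []"
    by auto
  show thesis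
  proof (rule that)
    show "pl_satisfies sc n \<alpha>"
      unfolding \<alpha>_def by (rule binomial_identity_linearize[OF K_infinite alg tf sat len1 len2])
    show "\<alpha> 0 \<noteq> 0" if "hd u1 \<in> A \<longleftrightarrow> hd u2 \<notin> A"
      using that a ne ne2 by (auto simp: \<alpha>_def hd_conv_nth)
    show "\<alpha> n \<noteq> 0" if "last u1 \<in> A \<longleftrightarrow> last u2 \<notin> A"
      using that a ne ne2 len1 len2 by (auto simp: \<alpha>_def last_conv_nth)
  qed
qed

lemma binomial_identity_partial_linear:
  fixes sc :: "'k::idom \<Rightarrow> 'r::ring \<Rightarrow> 'r"
  assumes K_infinite: "infinite (UNIV :: 'k set)" and alg: "assoc_algebra sc" and tf: "torsion_free sc"
    and nt: "binomial_nontrivial a1 u1 a2 u2" and sat: "binomial_satisfies sc a1 u1 a2 u2"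
  shows "left_reduced u1 u2 \<Longrightarrow> \<exists>n \<alpha>. pl_nontrivial n \<alpha> \<and> \<alpha> 0 \<noteq> 0 \<and> pl_satisfies sc n \<alpha>"
    and "right_reduced u1 u2 \<Longrightarrow> \<exists>n \<alpha>. pl_nontrivial n \<alpha> \<and> \<alpha> n \<noteq> 0 \<and> pl_satisfies sc n \<alpha>"
    and "reduced u1 u2 \<Longrightarrow>
      \<exists>n \<alpha>. pl_nontrivial n \<alpha> \<and> \<alpha> 0 \<noteq> 0 \<and> \<alpha> n \<noteq> 0 \<and> pl_satisfies sc n \<alpha>"
proof -
  have ne: "u1 \<noteq> []"
    using nt by (simp add: binomial_nontrivial_def)
  have cases: "(\<exists>n \<alpha>. pl_nontrivial n \<alpha> \<and> \<alpha> 0 \<noteq> 0 \<and> \<alpha> n \<noteq> 0 \<and> pl_satisfies sc n \<alpha>) \<or>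
      (a1 \<noteq> 0 \<and> a2 \<noteq> 0 \<and> length u1 = length u2)"
    using binomial_identity_cases[OF K_infinite alg tf nt sat]
      monomial_identity_pl_identity[OF K_infinite alg tf] by blast
  note separating = binomial_identity_pl_separating[OF K_infinite alg tf sat _ _ ne]
  show "\<exists>n \<alpha>. pl_nontrivial n \<alpha> \<and> \<alpha> 0 \<noteq> 0 \<and> pl_satisfies sc n \<alpha>" if "left_reduced u1 u2"
    using cases
  proof (elim disjE conjE)
    assume "a1 \<noteq> 0" "a2 \<noteq> 0" "length u1 = length u2"
    have hd_ne: "hd u1 \<noteq> hd u2"
      using that by (simp add: left_reduced_def)
    obtain A where "hd u1 \<in> A \<longleftrightarrow> hd u2 \<notin> A"
      using separating_set[OF hd_ne hd_ne] .
    obtain n \<alpha> where "pl_satisfies sc n \<alpha>" "(hd u1 \<in> A \<longleftrightarrow> hd u2 \<notin> A) \<Longrightarrow> \<alpha> 0 \<noteq> 0"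
      by (rule separating[OF \<open>a1 \<noteq> 0\<close> \<open>a2 \<noteq> 0\<close> \<open>length u1 = length u2\<close>, of A]) blast
    with \<open>hd u1 \<in> A \<longleftrightarrow> hd u2 \<notin> A\<close> show ?thesis
      by (intro exI[of _ n] exI[of _ \<alpha>]) (simp add: pl_nontrivialI[of 0])
  qed blast
  show "\<exists>n \<alpha>. pl_nontrivial n \<alpha> \<and> \<alpha> n \<noteq> 0 \<and> pl_satisfies sc n \<alpha>" if "right_reduced u1 u2"
    using cases
  proof (elim disjE conjE)
    assume "a1 \<noteq> 0" "a2 \<noteq> 0" "length u1 = length u2"
    have last_ne: "last u1 \<noteq> last u2"
      using that by (simp add: right_reduced_def)
    obtain A where "last u1 \<in> A \<longleftrightarrow> last u2 \<notin> A"
      using separating_set[OF last_ne last_ne] .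
    obtain n \<alpha> where "pl_satisfies sc n \<alpha>" "(last u1 \<in> A \<longleftrightarrow> last u2 \<notin> A) \<Longrightarrow> \<alpha> n \<noteq> 0"
      by (rule separating[OF \<open>a1 \<noteq> 0\<close> \<open>a2 \<noteq> 0\<close> \<open>length u1 = length u2\<close>, of A]) blast
    with \<open>last u1 \<in> A \<longleftrightarrow> last u2 \<notin> A\<close> show ?thesis
      by (intro exI[of _ n] exI[of _ \<alpha>]) (simp add: pl_nontrivialI[of n])
  qed blast
  show "\<exists>n \<alpha>. pl_nontrivial n \<alpha> \<and> \<alpha> 0 \<noteq> 0 \<and> \<alpha> n \<noteq> 0 \<and> pl_satisfies sc n \<alpha>"
    if "reduced u1 u2"
    using cases
  proof (elim disjE conjE)
    assume "a1 \<noteq> 0" "a2 \<noteq> 0" "length u1 = length u2"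
    have hd_ne: "hd u1 \<noteq> hd u2" and last_ne: "last u1 \<noteq> last u2"
      using that by (simp_all add: reduced_def left_reduced_def right_reduced_def)
    obtain A where "hd u1 \<in> A \<longleftrightarrow> hd u2 \<notin> A" "last u1 \<in> A \<longleftrightarrow> last u2 \<notin> A"
      using separating_set[OF hd_ne last_ne] .
    obtain n \<alpha> where "pl_satisfies sc n \<alpha>" "(hd u1 \<in> A \<longleftrightarrow> hd u2 \<notin> A) \<Longrightarrow> \<alpha> 0 \<noteq> 0"
      "(last u1 \<in> A \<longleftrightarrow> last u2 \<notin> A) \<Longrightarrow> \<alpha> n \<noteq> 0"
      by (rule separating[OF \<open>a1 \<noteq> 0\<close> \<open>a2 \<noteq> 0\<close> \<open>length u1 = length u2\<close>, of A]) blast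
    with \<open>hd u1 \<in> A \<longleftrightarrow> hd u2 \<notin> A\<close> \<open>last u1 \<in> A \<longleftrightarrow> last u2 \<notin> A\<close> show ?thesis
      by (intro exI[of _ n] exI[of _ \<alpha>]) (simp add: pl_nontrivialI[of 0])
  qed blast
qed

theorem proposition2p1:
  fixes sc :: "'k::idom \<Rightarrow> 'r::ring \<Rightarrow> 'r"
  assumes K_infinite: "infinite (UNIV :: 'k set)"
    and alg: "assoc_algebra sc"
    and tf: "torsion_free sc"
  shows
    "((\<exists>u v. sg_identity u v \<and> left_reduced u v \<and> sg_satisfies TYPE('s::semigroup_mult) u v)
        \<longrightarrow> (\<exists>u v. sg_identity u v \<and> left_reduced u v \<and> in_xy u v \<and> sg_satisfies TYPE('s) u v))
     \<and> ((\<exists>u v. sg_identity u v \<and> right_reduced u v \<and> sg_satisfies TYPE('s) u v)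
        \<longrightarrow> (\<exists>u v. sg_identity u v \<and> right_reduced u v \<and> in_xy u v \<and> sg_satisfies TYPE('s) u v))
     \<and> ((\<exists>u v. sg_identity u v \<and> reduced u v \<and> sg_satisfies TYPE('s) u v)
        \<longrightarrow> (\<exists>u v. sg_identity u v \<and> reduced u v \<and> in_xy u v \<and> sg_satisfies TYPE('s) u v))
     \<and> ((\<exists>a1 u1 a2 u2. binomial_nontrivial a1 u1 a2 u2 \<and> binomial_satisfies sc a1 u1 a2 u2)
        \<longrightarrow> bounded_nil TYPE('r) \<or> (\<exists>u v. sg_identity u v \<and> sg_satisfies TYPE('r) u v))
     \<and> ((\<exists>a1 u1 a2 u2. binomial_nontrivial a1 u1 a2 u2 \<and> left_reduced u1 u2
          \<and> binomial_satisfies sc a1 u1 a2 u2)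
        \<longrightarrow> (\<exists>n \<alpha>. pl_nontrivial n \<alpha> \<and> \<alpha> 0 \<noteq> 0 \<and> pl_satisfies sc n \<alpha>))
     \<and> ((\<exists>a1 u1 a2 u2. binomial_nontrivial a1 u1 a2 u2 \<and> right_reduced u1 u2
          \<and> binomial_satisfies sc a1 u1 a2 u2)
        \<longrightarrow> (\<exists>n \<alpha>. pl_nontrivial n \<alpha> \<and> \<alpha> n \<noteq> 0 \<and> pl_satisfies sc n \<alpha>))
     \<and> ((\<exists>a1 u1 a2 u2. binomial_nontrivial a1 u1 a2 u2 \<and> reduced u1 u2
          \<and> binomial_satisfies sc a1 u1 a2 u2)
        \<longrightarrow> (\<exists>n \<alpha>. pl_nontrivial n \<alpha> \<and> \<alpha> 0 \<noteq> 0 \<and> \<alpha> n \<noteq> 0 \<and> pl_satisfies sc n \<alpha>))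
     \<and> (\<forall>n. n \<ge> 1 \<longrightarrow> (\<forall>y :: 'r. spow y n = 0) \<longrightarrow> (\<forall>x y :: 'r. e_comm x y (2 * n - 1) = 0))"
  by (intro conjI impI allI; (elim exE conjE)?;
      rule sg_identity_two_variables
        binomial_identity_bounded_nil_or_sg_identity[OF K_infinite alg tf]
        binomial_identity_partial_linear[OF K_infinite alg tf]
        e_comm_eq_zero_if_bounded_nil;
      assumption)

end
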